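(* The following two assertions are equivalent. (T) For every admissible index $\mathbf{k}=(k_1,\ldots,k_n)$ with dual index $\mathbf{k}'$, every integer $l\ge0$ and every $\alpha$ with $\mathrm{Re}\,\alpha>0$, $S_l(\mathbf{k};\alpha)=S_l(\mathbf{k}';\alpha)$. (P) For every admissible index $\mathbf{k}=(k_1,\ldots,k_n)$ with dual index $\mathbf{k}'=(k'_1,\ldots,k'_{n'})$, every integer $l\ge0$ and every $\alpha$ with $\mathrm{Re}\,\alpha>0$, \[ \sum_{i=0}^{l}\sum_{\substack{i_1+\cdots+i_{n-1}=i\\ i_j\in\mathbb{Z}_{\ge0}}}S_{l-i}(k_1,\{1\}^{i_1},k_2,\ldots,k_{n-1},\{1\}^{i_{n-1}},k_n;\alpha) =\sum_{i=0}^{l}\sum_{\mathbf{i}^{(1)}_{k'_1-1}+\cdots+\mathbf{i}^{(n')}_{k'_{n'}-2}=i}S_{l-i}\bigl(k'_1+\mathbf{i}^{(1)}_{k'_1-1},\ldots,k'_{n'-1}+\mathbf{i}^{(n'-1)}_{k'_{n'-1}-1},k'_{n'}+\mathbf{i}^{(n')}_{k'_{n'}-2};\alpha\bigr). \]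
   Context: An index $(k_1,\ldots,k_n)$ is admissible if all $k_i$ are positive integers and $k_n\ge2$. For $a\in\mathbb{C}$, $(a)_0=1$ and $(a)_m=a(a+1)\cdots(a+m-1)$ for $m\ge1$. For an admissible index and $\mathrm{Re}\,\alpha>0$, \[ Z(\mathbf{k};\alpha)=\sum_{0\le m_1<\cdots<m_n}\frac{(\alpha)_{m_1}}{m_1!}\frac{m_n!}{(\alpha)_{m_n+1}}\frac{1}{(m_1+\alpha)^{k_1}\cdots(m_{n-1}+\alpha)^{k_{n-1}}(m_n+\alpha)^{k_n-1}}, \] and $S_l(\mathbf{k};\alpha):=\sum_{l_1+\cdots+l_n=l,\ l_i\in\mathbb{Z}_{\ge0}}Z(k_1+l_1,\ldots,k_n+l_n;\alpha)$. $\{1\}^a$ denotes $a$ consecutive entries equal to $1$. Every admissible index can be written uniquely as $(\{1\}^{a_1},b_1+2,\ldots,\{1\}^{a_s},b_s+2)$ with $a_j,b_j\in\mathbb{Z}_{\ge0}$; its dual index is $(\{1\}^{b_s},a_s+2,\ldots,\{1\}^{b_1},a_1+2)$. For $m\ge1$, $r\ge0$, $\mathbf{i}^{(m)}_r:=i^{(m)}_1+\cdots+i^{(m)}_r$ (equal to $0$ if $r=0$); the sum over $\mathbf{i}^{(1)}_{k'_1-1}+\cdots+\mathbf{i}^{(n')}_{k'_{n'}-2}=i$ runs over all tuples of nonnegative integers $(i^{(1)}_1,\ldots,i^{(1)}_{k'_1-1},\ldots,i^{(n')}_1,\ldots,i^{(n')}_{k'_{n'}-2})$ with total sum $i$. 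*)

theory Defs
  imports "HOL-Analysis.Analysis"
begin

definition admissible :: "nat list \<Rightarrow> bool" where
  "admissible ks \<longleftrightarrow> ks \<noteq> [] \<and> (\<forall>k\<in>set ks. k \<ge> 1) \<and> last ks \<ge> 2"

definition Zterm :: "nat list \<Rightarrow> complex \<Rightarrow> nat list \<Rightarrow> complex" where
  "Zterm ks \<alpha> ms =
     pochhammer \<alpha> (hd ms) / fact (hd ms) * (fact (last ms) / pochhammer \<alpha> (last ms + 1))
     / ((\<Prod>j<length ks - 1. (of_nat (ms ! j) + \<alpha>) ^ (ks ! j))
        * (of_nat (last ms) + \<alpha>) ^ (last ks - 1))"

definition Z :: "nat list \<Rightarrow> complex \<Rightarrow> complex" where
  "Z ks \<alpha> = infsum (Zterm ks \<alpha>) {ms. length ms = length ks \<and> sorted_wrt (<) ms}"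

definition S :: "nat \<Rightarrow> nat list \<Rightarrow> complex \<Rightarrow> complex" where
  "S l ks \<alpha> = (\<Sum>ls\<in>{ls. length ls = length ks \<and> sum_list ls = l}. Z (map2 (+) ks ls) \<alpha>)"

definition blocks_to_index :: "(nat \<times> nat) list \<Rightarrow> nat list" where
  "blocks_to_index ps = concat (map (\<lambda>(a, b). replicate a 1 @ [b + 2]) ps)"

definition dual :: "nat list \<Rightarrow> nat list" where
  "dual ks = blocks_to_index (rev (map prod.swap (THE ps. blocks_to_index ps = ks)))"

definition insert_ones :: "nat list \<Rightarrow> nat list \<Rightarrow> nat list" where
  "insert_ones ks is =
     concat (map (\<lambda>j. ks ! j # replicate (is ! j) 1) [0..<length ks - 1]) @ [last ks]"

definition P_lhs :: "nat \<Rightarrow> nat list \<Rightarrow> complex \<Rightarrow> complex" where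
  "P_lhs l ks \<alpha> = (\<Sum>i=0..l. \<Sum>is\<in>{is. length is = length ks - 1 \<and> sum_list is = i}.
                      S (l - i) (insert_ones ks is) \<alpha>)"

definition blocks_len :: "nat list \<Rightarrow> nat \<Rightarrow> nat" where
  "blocks_len kd m = (if m = length kd - 1 then kd ! m - 2 else kd ! m - 1)"

definition P_rhs :: "nat \<Rightarrow> nat list \<Rightarrow> complex \<Rightarrow> complex" where
  "P_rhs l kd \<alpha> = (\<Sum>i=0..l. \<Sum>iss\<in>{iss. length iss = length kd
                        \<and> (\<forall>m<length kd. length (iss ! m) = blocks_len kd m)
                        \<and> sum_list (map sum_list iss) = i}.
                      S (l - i) (map (\<lambda>m. kd ! m + sum_list (iss ! m)) [0..<length kd]) \<alpha>)"

end

theory Submission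
  imports Defs
begin

text \<open>Write \<open>k = (1^{a_1}, b_1+2, \<dots>, 1^{a_s}, b_s+2)\<close>. Inserting ones into the gaps of \<open>k\<close>
  only lengthens its runs of ones: if \<open>c_t\<close> ones fall into block \<open>t\<close>, the new index has blocks
  \<open>(a_t + c_t, b_t)\<close>, so its dual is \<open>k'\<close> with \<open>c_t\<close> added to the entry \<open>a_t + 2\<close>. This is a
  term of the right-hand side of (P), and grouping the insertion tuple by blocks is a sum-preserving
  bijection between the index sets of the two sides. Hence (T) gives (P) term by term. Conversely,
  the \<open>i = 0\<close> terms of (P) are \<open>S_l(k)\<close> and \<open>S_l(k')\<close>, and all other terms agree by induction
  on \<open>l\<close>.\<close>

lemma sum_list_concat: "sum_list (concat xss) = (\<Sum>xs\<leftarrow>xss. sum_list (xs :: 'a :: monoid_add list))"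
  by (induction xss) simp_all

lemma map_nth_eq_map2: "length ys = length xs \<Longrightarrow> map (\<lambda>m. f (xs ! m) (ys ! m)) [0..<length xs] = map2 f xs ys"
  by (rule nth_equalityI) simp_all

lemma blocks_to_index_Nil [simp]: "blocks_to_index [] = []"
  by (simp add: blocks_to_index_def)

lemma blocks_to_index_Cons [simp]:
  "blocks_to_index (p # ps) = replicate (fst p) 1 @ (snd p + 2) # blocks_to_index ps"
  by (simp add: blocks_to_index_def case_prod_beta)

lemma blocks_to_index_append [simp]:
  "blocks_to_index (ps @ qs) = blocks_to_index ps @ blocks_to_index qs"
  by (simp add: blocks_to_index_def)

lemma length_blocks_to_index: "length (blocks_to_index ps) = (\<Sum>p\<leftarrow>ps. Suc (fst p))"
  by (induction ps) auto

lemma replicate_one_Cons_inject: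
  assumes "replicate a (1::nat) @ (b + 2) # xs = replicate c 1 @ (d + 2) # ys"
  shows "a = c \<and> b = d \<and> xs = ys"
  using assms
proof (induction a arbitrary: c)
  case 0
  then show ?case by (cases c) auto
next
  case (Suc a)
  then show ?case by (cases c) auto
qed

lemma blocks_to_index_inject: "blocks_to_index ps = blocks_to_index qs \<longleftrightarrow> ps = qs"
proof
  show "blocks_to_index ps = blocks_to_index qs \<Longrightarrow> ps = qs"
  proof (induction ps arbitrary: qs)
    case Nil
    then show ?case by (cases qs) auto
  next
    case (Cons p ps)
    then obtain q qs' where "qs = q # qs'"
      by (cases qs) auto
    with Cons.prems have "fst p = fst q \<and> snd p = snd q \<and> blocks_to_index ps = blocks_to_index qs'"
      by (intro replicate_one_Cons_inject) simp
    with Cons.IH \<open>qs = q # qs'\<close> show ?case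
      by (simp add: prod_eq_iff)
  qed
qed simp

lemma ex_blocks_to_index:
  "\<forall>k\<in>set ks. k \<ge> 1 \<Longrightarrow> (ks \<noteq> [] \<longrightarrow> last ks \<ge> 2) \<Longrightarrow> \<exists>ps. blocks_to_index ps = ks"
proof (induction ks)
  case Nil
  show ?case by (intro exI[of _ "[]"]) simp
next
  case (Cons k ks)
  show ?case
  proof (cases "ks = []")
    case True
    with Cons.prems show ?thesis by (intro exI[of _ "[(0, k - 2)]"]) auto
  next
    case False
    with Cons obtain ps' where "blocks_to_index ps' = ks"
      by auto
    with False obtain p ps where ps: "blocks_to_index (p # ps) = ks"
      by (cases ps') auto
    show ?thesis
    proof (cases "k \<ge> 2")
      case True
      with ps show ?thesis by (intro exI[of _ "(0, k - 2) # p # ps"]) auto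
    next
      case False
      with Cons.prems have "k = 1" by auto
      with ps show ?thesis by (intro exI[of _ "(Suc (fst p), snd p) # ps"]) auto
    qed
  qed
qed

lemma admissible_blocks_to_index: "ps \<noteq> [] \<Longrightarrow> admissible (blocks_to_index ps)"
proof -
  assume "ps \<noteq> []"
  then obtain qs p where "ps = qs @ [p]"
    by (cases ps rule: rev_cases) auto
  moreover have "\<forall>k\<in>set (blocks_to_index qs). k \<ge> 1" for qs
    by (induction qs) auto
  ultimately show ?thesis
    by (auto simp: admissible_def)
qed

lemma admissible_obtain_blocks:
  assumes "admissible ks"
  obtains a b qs where "ks = blocks_to_index ((a, b) # qs)"
proof -
  from assms obtain ps where ps: "blocks_to_index ps = ks"
    using ex_blocks_to_index[of ks] unfolding admissible_def by auto
  with assms have "ps \<noteq> []"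
    by (auto simp: admissible_def)
  with ps that show thesis
    by (cases ps) auto
qed

lemma dual_blocks_to_index: "dual (blocks_to_index ps) = blocks_to_index (rev (map prod.swap ps))"
  unfolding dual_def by (simp add: blocks_to_index_inject)

definition lists_with_lengths :: "nat list \<Rightarrow> 'a list list set" where
  "lists_with_lengths Ls = {G. list_all2 (\<lambda>g L. length g = L) G Ls}"

lemma length_concat_lists_with_lengths:
  "G \<in> lists_with_lengths Ls \<Longrightarrow> length (concat G) = sum_list Ls"
  unfolding lists_with_lengths_def mem_Collect_eq
  by (induction G Ls rule: list_all2_induct) simp_all

lemma lists_with_lengths_Nil [simp]: "lists_with_lengths [] = {[]}"
  by (auto simp: lists_with_lengths_def)

lemma Cons_in_lists_with_lengths [simp]:
  "g # G \<in> lists_with_lengths (L # Ls) \<longleftrightarrow> length g = L \<and> G \<in> lists_with_lengths Ls"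
  by (simp add: lists_with_lengths_def)

lemma in_lists_with_lengths_Cons:
  "G \<in> lists_with_lengths (L # Ls) \<longleftrightarrow> (\<exists>g H. G = g # H \<and> length g = L \<and> H \<in> lists_with_lengths Ls)"
  by (auto simp: lists_with_lengths_def list_all2_Cons2)

lemma lists_with_lengths_conv_nth:
  "lists_with_lengths Ls = {G. length G = length Ls \<and> (\<forall>m<length Ls. length (G ! m) = Ls ! m)}"
  by (auto simp: lists_with_lengths_def list_all2_conv_all_nth)

lemma bij_betw_concat_lists_with_lengths:
  "bij_betw concat (lists_with_lengths Ls :: 'a list list set) {xs. length xs = sum_list Ls}"
proof (induction Ls)
  case Nil
  then show ?case by (simp add: bij_betw_def)
next
  case (Cons L Ls)
  have inj: "inj_on concat (lists_with_lengths Ls :: 'a list list set)"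
    and img: "concat ` (lists_with_lengths Ls :: 'a list list set) = {xs. length xs = sum_list Ls}"
    using Cons.IH by (auto simp: bij_betw_def)
  show ?case
  proof (rule bij_betwI')
    fix G G' :: "'a list list"
    assume "G \<in> lists_with_lengths (L # Ls)" "G' \<in> lists_with_lengths (L # Ls)"
    then obtain g H g' H' where G: "G = g # H" "length g = L" "H \<in> lists_with_lengths Ls"
        and G': "G' = g' # H'" "length g' = L" "H' \<in> lists_with_lengths Ls"
      by (auto simp: in_lists_with_lengths_Cons)
    have "concat G = concat G' \<longleftrightarrow> g = g' \<and> concat H = concat H'"
      using G G' by auto
    also have "\<dots> \<longleftrightarrow> G = G'"
      using inj_onD[OF inj _ G(3) G'(3)] G G' by auto
    finally show "concat G = concat G' \<longleftrightarrow> G = G'" .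
  next
    fix G assume "G \<in> lists_with_lengths (L # Ls)"
    then show "concat G \<in> {xs. length xs = sum_list (L # Ls)}"
      using length_concat_lists_with_lengths by blast
  next
    fix xs :: "'a list" assume xs: "xs \<in> {xs. length xs = sum_list (L # Ls)}"
    then have "drop L xs \<in> concat ` lists_with_lengths Ls"
      unfolding img by simp
    then obtain H where H: "H \<in> lists_with_lengths Ls" "drop L xs = concat H"
      by auto
    have "xs = concat (take L xs # H)"
      using H(2) by (metis append_take_drop_id concat.simps(2))
    with xs H(1) show "\<exists>G\<in>lists_with_lengths (L # Ls). xs = concat G"
      by (intro bexI[of _ "take L xs # H"]) auto
  qed
qed

lemma bij_betw_rev_lists_with_lengths:
  "bij_betw rev (lists_with_lengths Ls) (lists_with_lengths (rev Ls))"
  by (rule bij_betwI[where g = rev]) (auto simp: lists_with_lengths_def list_all2_rev1)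

lemma replicate_append_in_lists_with_lengths_iff:
  "iss \<in> lists_with_lengths (replicate n 0 @ Ls)
     \<longleftrightarrow> (\<exists>vs. iss = replicate n [] @ vs \<and> vs \<in> lists_with_lengths Ls)"
proof (induction n arbitrary: iss)
  case 0
  then show ?case by simp
next
  case (Suc n)
  then show ?case
    by (auto simp: in_lists_with_lengths_Cons)
qed

definition ones_before :: "nat list \<Rightarrow> nat list \<Rightarrow> nat list" where
  "ones_before is ks = concat (map2 (\<lambda>i k. replicate i 1 @ [k]) is ks)"

lemma ones_before_Cons [simp]: "ones_before (i # is) (k # ks) = replicate i 1 @ k # ones_before is ks"
  by (simp add: ones_before_def)

lemma ones_before_append:
  "length is = length ks \<Longrightarrow> ones_before (is @ is') (ks @ ks') = ones_before is ks @ ones_before is' ks'"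
  by (simp add: ones_before_def zip_append)

lemma ones_before_block:
  "length is = Suc a \<Longrightarrow> ones_before is (replicate a 1 @ [k]) = replicate (a + sum_list is) 1 @ [k]"
proof (induction a arbitrary: "is")
  case 0
  then show ?case by (cases "is") (auto simp: ones_before_def)
next
  case (Suc a)
  then obtain i is' where "is = i # is'"
    by (cases "is") auto
  with Suc show ?case
    by (simp add: replicate_add[symmetric] replicate_app_Cons_same)
qed

lemma ones_before_blocks_to_index:
  "list_all2 (\<lambda>g p. length g = Suc (fst p)) G ps \<Longrightarrow>
   ones_before (concat G) (blocks_to_index ps) = blocks_to_index (map2 (\<lambda>p g. (fst p + sum_list g, snd p)) ps G)"
proof (induction G ps rule: list_all2_induct)
  case Nil
  then show ?case by (simp add: ones_before_def)
next
  case (Cons g G p ps)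
  have "ones_before (concat (g # G)) (blocks_to_index (p # ps))
      = ones_before (g @ concat G) ((replicate (fst p) 1 @ [snd p + 2]) @ blocks_to_index ps)"
    by simp
  also have "\<dots> = ones_before g (replicate (fst p) 1 @ [snd p + 2]) @ ones_before (concat G) (blocks_to_index ps)"
    using Cons.hyps(1) by (intro ones_before_append) simp
  also have "\<dots> = (replicate (fst p + sum_list g) 1 @ [snd p + 2])
                 @ blocks_to_index (map2 (\<lambda>p g. (fst p + sum_list g, snd p)) ps G)"
    by (simp only: ones_before_block[OF Cons.hyps(1)] Cons.IH)
  finally show ?case
    by simp
qed

lemma ones_before_replicate_zero: "ones_before (replicate (length ks) 0) ks = ks"
  by (induction ks) (simp_all add: ones_before_def)

lemma concat_map2_Cons_replicate_snoc:
  "length ks = length is \<Longrightarrow>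
   concat (map2 (\<lambda>k i. k # replicate i 1) ks is) @ [y] = hd (ks @ [y]) # ones_before is (tl (ks @ [y]))"
proof (induction ks "is" rule: list_induct2)
  case Nil
  then show ?case by (simp add: ones_before_def)
next
  case (Cons k ks i "is")
  then show ?case
    by (cases ks) simp_all
qed

lemma insert_ones_eq_hd_Cons_ones_before:
  assumes "ks \<noteq> []" and "length is = length ks - 1"
  shows "insert_ones ks is = hd ks # ones_before is (tl ks)"
proof -
  have "map (\<lambda>j. ks ! j # replicate (is ! j) 1) [0..<length ks - 1] = map2 (\<lambda>k i. k # replicate i 1) (butlast ks) is"
    using assms(2) by (intro nth_equalityI) (auto simp: nth_butlast)
  then have "insert_ones ks is = concat (map2 (\<lambda>k i. k # replicate i 1) (butlast ks) is) @ [last ks]"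
    by (simp add: insert_ones_def)
  also have "\<dots> = hd (butlast ks @ [last ks]) # ones_before is (tl (butlast ks @ [last ks]))"
    using assms(2) by (intro concat_map2_Cons_replicate_snoc) simp
  finally show ?thesis
    using assms(1) by simp
qed

lemma insert_ones_replicate_zero: "ks \<noteq> [] \<Longrightarrow> insert_ones ks (replicate (length ks - 1) 0) = ks"
  using ones_before_replicate_zero[of "tl ks"] by (simp add: insert_ones_eq_hd_Cons_ones_before)

lemma insert_ones_blocks_to_index:
  assumes "G \<in> lists_with_lengths (a # map (\<lambda>p. Suc (fst p)) qs)"
  shows "insert_ones (blocks_to_index ((a, b) # qs)) (concat G)
           = blocks_to_index (map2 (\<lambda>p g. (fst p + sum_list g, snd p)) ((a, b) # qs) G)"
proof -
  let ?ks = "blocks_to_index ((a, b) # qs)"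
  from assms obtain g H where G: "G = g # H" "length g = a"
      and H: "list_all2 (\<lambda>g p. length g = Suc (fst p)) H qs"
    by (auto simp: lists_with_lengths_def list_all2_Cons2 list_all2_map2)
  have ne: "?ks \<noteq> []"
    by simp
  have len: "length (concat G) = length ?ks - 1"
    using length_concat_lists_with_lengths[OF assms] by (simp add: length_blocks_to_index)
  have "hd ?ks # ones_before (concat G) (tl ?ks)
          = blocks_to_index (map2 (\<lambda>p g. (fst p + sum_list g, snd p)) ((a, b) # qs) G)"
  proof (cases a)
    case 0
    with G H show ?thesis
      by (simp add: ones_before_blocks_to_index)
  next
    case (Suc a')
    with G H have "list_all2 (\<lambda>g p. length g = Suc (fst p)) G ((a', b) # qs)"
      by simp
    from Suc ones_before_blocks_to_index[OF this] show ?thesis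
      using G by simp
  qed
  then show ?thesis
    unfolding insert_ones_eq_hd_Cons_ones_before[OF ne len] .
qed

text \<open>The tuple attached to an entry \<open>1\<close> of the dual index is empty, so a family of insertion
  groups becomes a right-hand tuple family by padding with empty tuples.\<close>

definition pad_blocks :: "nat list \<Rightarrow> 'a list list \<Rightarrow> 'a list list" where
  "pad_blocks ns G = concat (map2 (\<lambda>n g. replicate n [] @ [g]) ns G)"

lemma pad_blocks_Nil [simp]: "pad_blocks [] [] = []"
  by (simp add: pad_blocks_def)

lemma pad_blocks_Cons [simp]: "pad_blocks (n # ns) (g # G) = replicate n [] @ g # pad_blocks ns G"
  by (simp add: pad_blocks_def)

lemma sum_pad_blocks:
  "length ns = length G \<Longrightarrow> (\<Sum>g\<leftarrow>pad_blocks ns G. sum_list g) = (\<Sum>g\<leftarrow>G. sum_list (g :: nat list))"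
  by (induction ns G rule: list_induct2) simp_all

lemma blocks_to_index_plus_pad_blocks:
  "length Q = length G \<Longrightarrow>
   map2 (\<lambda>k g. k + sum_list g) (blocks_to_index Q) (pad_blocks (map fst Q) G)
     = blocks_to_index (map2 (\<lambda>q g. (fst q, snd q + sum_list g)) Q G)"
  by (induction Q G rule: list_induct2) (simp_all add: zip_append)

lemma bij_betw_pad_blocks:
  assumes "length ns = length Ls"
  shows "bij_betw (pad_blocks ns) (lists_with_lengths Ls :: 'a list list set)
           (lists_with_lengths (concat (map2 (\<lambda>n L. replicate n 0 @ [L]) ns Ls)))"
  using assms
proof (induction ns Ls rule: list_induct2)
  case Nil
  then show ?case by (simp add: bij_betw_def)
next
  case (Cons n ns L Ls)
  let ?shape = "concat (map2 (\<lambda>n L. replicate n 0 @ [L]) ns Ls)"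
  have inj: "inj_on (pad_blocks ns) (lists_with_lengths Ls :: 'a list list set)"
    and img: "pad_blocks ns ` (lists_with_lengths Ls :: 'a list list set) = lists_with_lengths ?shape"
    using Cons.IH by (auto simp: bij_betw_def)
  have shape: "concat (map2 (\<lambda>n L. replicate n 0 @ [L]) (n # ns) (L # Ls)) = replicate n 0 @ L # ?shape"
    by simp
  show ?case
    unfolding shape
  proof (rule bij_betwI')
    fix G G' :: "'a list list"
    assume "G \<in> lists_with_lengths (L # Ls)" "G' \<in> lists_with_lengths (L # Ls)"
    then obtain g H g' H' where G: "G = g # H" "H \<in> lists_with_lengths Ls"
        and G': "G' = g' # H'" "H' \<in> lists_with_lengths Ls"
      by (auto simp: in_lists_with_lengths_Cons)
    have "pad_blocks (n # ns) G = pad_blocks (n # ns) G' \<longleftrightarrow> g = g' \<and> pad_blocks ns H = pad_blocks ns H'"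
      using G G' by simp
    also have "\<dots> \<longleftrightarrow> G = G'"
      using inj_onD[OF inj _ G(2) G'(2)] G G' by auto
    finally show "pad_blocks (n # ns) G = pad_blocks (n # ns) G' \<longleftrightarrow> G = G'" .
  next
    fix G :: "'a list list"
    assume "G \<in> lists_with_lengths (L # Ls)"
    then obtain g H where G: "G = g # H" "length g = L" "H \<in> lists_with_lengths Ls"
      by (auto simp: in_lists_with_lengths_Cons)
    from G(3) img have "pad_blocks ns H \<in> lists_with_lengths ?shape"
      by blast
    with G show "pad_blocks (n # ns) G \<in> lists_with_lengths (replicate n 0 @ L # ?shape)"
      unfolding replicate_append_in_lists_with_lengths_iff by simp
  next
    fix iss :: "'a list list"
    assume "iss \<in> lists_with_lengths (replicate n 0 @ L # ?shape)"
    then obtain g vs where iss: "iss = replicate n [] @ g # vs" "length g = L" "vs \<in> lists_with_lengths ?shape"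
      by (auto simp: replicate_append_in_lists_with_lengths_iff in_lists_with_lengths_Cons)
    from iss(3) img obtain H where "H \<in> lists_with_lengths Ls" "vs = pad_blocks ns H"
      by blast
    with iss show "\<exists>G\<in>lists_with_lengths (L # Ls). iss = pad_blocks (n # ns) G"
      by (intro bexI[of _ "g # H"]) simp_all
  qed
qed

lemma map_blocks_len:
  "kd \<noteq> [] \<Longrightarrow> map (blocks_len kd) [0..<length kd] = map (\<lambda>k. k - 1) (butlast kd) @ [last kd - 2]"
  by (rule nth_equalityI) (auto simp: blocks_len_def nth_append nth_butlast last_conv_nth)

lemma map_minus_one_blocks_to_index:
  "map (\<lambda>k. k - 1) (blocks_to_index Q) = concat (map2 (\<lambda>n L. replicate n 0 @ [L]) (map fst Q) (map (\<lambda>q. Suc (snd q)) Q))"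
  by (induction Q) auto

lemma blocks_len_dual_blocks_to_index:
  fixes a b :: nat and qs :: "(nat \<times> nat) list"
  defines "kd \<equiv> dual (blocks_to_index ((a, b) # qs))"
  shows "map (blocks_len kd) [0..<length kd]
           = concat (map2 (\<lambda>n L. replicate n 0 @ [L]) (rev (b # map snd qs)) (rev (a # map (\<lambda>p. Suc (fst p)) qs)))"
proof -
  define Q where "Q = rev (map prod.swap qs)"
  have kd: "kd = blocks_to_index Q @ replicate b 1 @ [a + 2]"
    unfolding kd_def Q_def dual_blocks_to_index by simp
  have "concat (map2 (\<lambda>n L. replicate n 0 @ [L]) (rev (b # map snd qs)) (rev (a # map (\<lambda>p. Suc (fst p)) qs)))
      = concat (map2 (\<lambda>n L. replicate n 0 @ [L]) (map fst Q) (map (\<lambda>q. Suc (snd q)) Q)) @ replicate b 0 @ [a]"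
    by (simp add: Q_def rev_map zip_append comp_def)
  also have "\<dots> = map (\<lambda>k. k - 1) (butlast kd) @ [last kd - 2]"
    unfolding kd map_minus_one_blocks_to_index[symmetric] by (simp add: butlast_append)
  also have "\<dots> = map (blocks_len kd) [0..<length kd]"
    by (rule map_blocks_len[symmetric]) (simp add: kd)
  finally show ?thesis ..
qed

lemma bij_betw_pad_blocks_dual_shape:
  fixes a b :: nat and qs :: "(nat \<times> nat) list"
  defines "kd \<equiv> dual (blocks_to_index ((a, b) # qs))"
  shows "bij_betw (pad_blocks (rev (b # map snd qs)) \<circ> rev) (lists_with_lengths (a # map (\<lambda>p. Suc (fst p)) qs))
           {iss. length iss = length kd \<and> (\<forall>m<length kd. length (iss ! m) = blocks_len kd m)}"
proof -
  let ?ns = "rev (b # map snd qs)" and ?Ls = "a # map (\<lambda>p. Suc (fst p)) qs"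
  have "length ?ns = length (rev ?Ls)"
    by simp
  then have "bij_betw (pad_blocks ?ns \<circ> rev) (lists_with_lengths ?Ls)
               (lists_with_lengths (concat (map2 (\<lambda>n L. replicate n 0 @ [L]) ?ns (rev ?Ls))))"
    by (intro bij_betw_trans[OF bij_betw_rev_lists_with_lengths] bij_betw_pad_blocks)
  also have "lists_with_lengths (concat (map2 (\<lambda>n L. replicate n 0 @ [L]) ?ns (rev ?Ls)))
      = {iss. length iss = length kd \<and> (\<forall>m<length kd. length (iss ! m) = blocks_len kd m)}"
    unfolding kd_def blocks_len_dual_blocks_to_index[symmetric] lists_with_lengths_conv_nth by simp
  finally show ?thesis .
qed

lemma map2_rev_map_swap:
  "length xs = length ys \<Longrightarrow>
   map2 (\<lambda>q g. (fst q, snd q + sum_list g)) (rev (map prod.swap xs)) (rev ys)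
     = rev (map prod.swap (map2 (\<lambda>p g. (fst p + sum_list g, snd p)) xs ys))"
  by (induction xs ys rule: list_induct2) (auto simp: zip_append)

lemma dual_insert_ones_blocks_to_index:
  assumes "G \<in> lists_with_lengths (a # map (\<lambda>p. Suc (fst p)) qs)"
  shows "dual (insert_ones (blocks_to_index ((a, b) # qs)) (concat G))
           = map2 (\<lambda>k g. k + sum_list g) (dual (blocks_to_index ((a, b) # qs)))
               (pad_blocks (rev (b # map snd qs)) (rev G))"
proof -
  let ?ps = "(a, b) # qs" and ?Q = "rev (map prod.swap ((a, b) # qs))"
  have len: "length ?ps = length G" and lenQ: "length ?Q = length (rev G)"
    using assms by (auto simp: lists_with_lengths_def dest: list_all2_lengthD)
  have "rev (b # map snd qs) = map fst ?Q"
    by (simp add: rev_map)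
  then have "map2 (\<lambda>k g. k + sum_list g) (dual (blocks_to_index ?ps)) (pad_blocks (rev (b # map snd qs)) (rev G))
      = blocks_to_index (map2 (\<lambda>q g. (fst q, snd q + sum_list g)) ?Q (rev G))"
    by (simp only: dual_blocks_to_index blocks_to_index_plus_pad_blocks[OF lenQ])
  also have "\<dots> = dual (insert_ones (blocks_to_index ?ps) (concat G))"
    by (simp only: insert_ones_blocks_to_index[OF assms] dual_blocks_to_index map2_rev_map_swap[OF len])
  finally show ?thesis ..
qed

lemma insert_ones_dual_correspondence:
  assumes "admissible ks"
  obtains C and pad :: "nat list list \<Rightarrow> nat list list" where
    "bij_betw concat C {is. length is = length ks - 1}"
    "bij_betw pad C {iss. length iss = length (dual ks)
                        \<and> (\<forall>m<length (dual ks). length (iss ! m) = blocks_len (dual ks) m)}"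
    "\<And>G. G \<in> C \<Longrightarrow> sum_list (map sum_list (pad G)) = sum_list (concat G)"
    "\<And>G. G \<in> C \<Longrightarrow> admissible (insert_ones ks (concat G))"
    "\<And>G. G \<in> C \<Longrightarrow> dual (insert_ones ks (concat G))
                        = map (\<lambda>m. dual ks ! m + sum_list (pad G ! m)) [0..<length (dual ks)]"
proof -
  obtain a b qs where ks: "ks = blocks_to_index ((a, b) # qs)"
    using admissible_obtain_blocks[OF assms] .
  \<comment> \<open>\<open>G \<in> lists_with_lengths Ls\<close> groups the insertions by block: the first block of \<open>ks\<close> has
    \<open>a\<close> gaps in front of its entries, every later block one more than its number of ones.\<close>
  define Ls where "Ls = a # map (\<lambda>p. Suc (fst p)) qs"
  define ns where "ns = rev (b # map snd qs)"
  define pad :: "nat list list \<Rightarrow> nat list list" where "pad = pad_blocks ns \<circ> rev"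
  have lens: "length ns = length (rev Ls)"
    by (simp add: ns_def Ls_def)
  have "length ks - 1 = sum_list Ls"
    by (simp add: ks Ls_def length_blocks_to_index)
  then have "bij_betw concat (lists_with_lengths Ls) {is. length is = length ks - 1}"
    using bij_betw_concat_lists_with_lengths by simp
  moreover have "bij_betw pad (lists_with_lengths Ls) {iss. length iss = length (dual ks)
                   \<and> (\<forall>m<length (dual ks). length (iss ! m) = blocks_len (dual ks) m)}"
    unfolding pad_def ns_def Ls_def ks by (rule bij_betw_pad_blocks_dual_shape)
  moreover have "sum_list (map sum_list (pad G)) = sum_list (concat G)" if "G \<in> lists_with_lengths Ls" for G
    using that lens sum_pad_blocks[of ns "rev G"]
    by (auto simp: pad_def lists_with_lengths_def sum_list_concat rev_map[symmetric] dest: list_all2_lengthD)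
  moreover have "admissible (insert_ones ks (concat G))" if "G \<in> lists_with_lengths Ls" for G
    using that unfolding ks Ls_def insert_ones_blocks_to_index[OF that[unfolded Ls_def]]
    by (intro admissible_blocks_to_index) (auto simp: in_lists_with_lengths_Cons)
  moreover have "dual (insert_ones ks (concat G))
                   = map (\<lambda>m. dual ks ! m + sum_list (pad G ! m)) [0..<length (dual ks)]"
    if "G \<in> lists_with_lengths Ls" for G
  proof -
    have "length (pad G) = length (dual ks)"
      using that bij_betw_apply[OF \<open>bij_betw pad _ _\<close>] by auto
    then have "map (\<lambda>m. dual ks ! m + sum_list (pad G ! m)) [0..<length (dual ks)]
        = map2 (\<lambda>k g. k + sum_list g) (dual ks) (pad G)"
      by (rule map_nth_eq_map2)
    also have "\<dots> = dual (insert_ones ks (concat G))"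
      using dual_insert_ones_blocks_to_index[OF that[unfolded Ls_def], of b]
      by (simp add: ks pad_def ns_def)
    finally show ?thesis ..
  qed
  ultimately show thesis
    using that by blast
qed

lemma sum_insert_ones_eq_sum_dual:
  assumes "admissible ks" and f_g: "\<And>ks'. admissible ks' \<Longrightarrow> f ks' = g (dual ks')"
  shows "(\<Sum>is\<in>{is. length is = length ks - 1 \<and> sum_list is = i}. f (insert_ones ks is))
       = (\<Sum>iss\<in>{iss. length iss = length (dual ks)
                     \<and> (\<forall>m<length (dual ks). length (iss ! m) = blocks_len (dual ks) m)
                     \<and> sum_list (map sum_list iss) = i}.
            g (map (\<lambda>m. dual ks ! m + sum_list (iss ! m)) [0..<length (dual ks)]))"
proof -
  obtain C pad where bij_concat: "bij_betw concat C {is. length is = length ks - 1}"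
    and bij_pad: "bij_betw pad C {iss. length iss = length (dual ks)
                    \<and> (\<forall>m<length (dual ks). length (iss ! m) = blocks_len (dual ks) m)}"
    and sums: "\<And>G. G \<in> C \<Longrightarrow> sum_list (map sum_list (pad G)) = sum_list (concat G)"
    and adm: "\<And>G. G \<in> C \<Longrightarrow> admissible (insert_ones ks (concat G))"
    and dual: "\<And>G. G \<in> C \<Longrightarrow> dual (insert_ones ks (concat G))
                 = map (\<lambda>m. dual ks ! m + sum_list (pad G ! m)) [0..<length (dual ks)]"
    using insert_ones_dual_correspondence[OF assms(1)] by blast
  let ?C = "{G \<in> C. sum_list (concat G) = i}"
  have "bij_betw concat ?C {is. length is = length ks - 1 \<and> sum_list is = i}"
    using bij_betw_Collect[OF bij_concat] by (simp only: mem_Collect_eq)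
  then have "(\<Sum>is\<in>{is. length is = length ks - 1 \<and> sum_list is = i}. f (insert_ones ks is))
      = (\<Sum>G\<in>?C. f (insert_ones ks (concat G)))"
    by (rule sum.reindex_bij_betw[symmetric])
  also have "\<dots> = (\<Sum>G\<in>?C. g (map (\<lambda>m. dual ks ! m + sum_list (pad G ! m)) [0..<length (dual ks)]))"
    using f_g adm dual by (intro sum.cong) auto
  also have "bij_betw pad ?C {iss. length iss = length (dual ks)
                     \<and> (\<forall>m<length (dual ks). length (iss ! m) = blocks_len (dual ks) m)
                     \<and> sum_list (map sum_list iss) = i}"
    using bij_betw_Collect[OF bij_pad, where P = "\<lambda>G. sum_list (concat G) = i" and Q = "\<lambda>iss. sum_list (map sum_list iss) = i"] sums
    by (simp only: mem_Collect_eq conj_assoc)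
  then have "(\<Sum>G\<in>?C. g (map (\<lambda>m. dual ks ! m + sum_list (pad G ! m)) [0..<length (dual ks)]))
      = (\<Sum>iss\<in>{iss. length iss = length (dual ks)
                     \<and> (\<forall>m<length (dual ks). length (iss ! m) = blocks_len (dual ks) m)
                     \<and> sum_list (map sum_list iss) = i}.
            g (map (\<lambda>m. dual ks ! m + sum_list (iss ! m)) [0..<length (dual ks)]))"
    by (rule sum.reindex_bij_betw)
  finally show ?thesis .
qed

lemma sum_insert_ones_zero:
  assumes "ks \<noteq> []"
  shows "(\<Sum>is\<in>{is. length is = length ks - 1 \<and> sum_list is = 0}. f (insert_ones ks is)) = f ks"
proof -
  have "{is. length is = length ks - 1 \<and> sum_list is = (0::nat)} = {replicate (length ks - 1) 0}"
    by (auto intro!: nth_equalityI simp: all_set_conv_all_nth)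
  then show ?thesis
    using insert_ones_replicate_zero[OF assms] by simp
qed

lemma sum_dual_shape_zero:
  "(\<Sum>iss\<in>{iss. length iss = length kd \<and> (\<forall>m<length kd. length (iss ! m) = blocks_len kd m)
                  \<and> sum_list (map sum_list iss) = 0}.
      f (map (\<lambda>m. kd ! m + sum_list (iss ! m)) [0..<length kd])) = f kd"
proof -
  define zeros where "zeros = map (\<lambda>m. replicate (blocks_len kd m) (0::nat)) [0..<length kd]"
  have "{iss. length iss = length kd \<and> (\<forall>m<length kd. length (iss ! m) = blocks_len kd m)
               \<and> sum_list (map sum_list iss) = 0} = {zeros}"
    by (auto simp: zeros_def all_set_conv_all_nth intro!: nth_equalityI)
  moreover have "map (\<lambda>m. kd ! m + sum_list (zeros ! m)) [0..<length kd] = kd"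
    by (rule nth_equalityI) (simp_all add: zeros_def)
  ultimately show ?thesis
    by simp
qed

lemma P_lhs_eq_P_rhs_if_S_dual:
  assumes "admissible ks"
    and "\<And>i ks'. i \<le> l \<Longrightarrow> admissible ks' \<Longrightarrow> S (l - i) ks' \<alpha> = S (l - i) (dual ks') \<alpha>"
  shows "P_lhs l ks \<alpha> = P_rhs l (dual ks) \<alpha>"
  unfolding P_lhs_def P_rhs_def
  by (intro sum.cong refl sum_insert_ones_eq_sum_dual assms) simp

lemma S_dual_if_P_lhs_eq_P_rhs:
  assumes adm: "admissible ks" and P: "P_lhs l ks \<alpha> = P_rhs l (dual ks) \<alpha>"
    and lower: "\<And>i ks'. 0 < i \<Longrightarrow> i \<le> l \<Longrightarrow> admissible ks' \<Longrightarrow> S (l - i) ks' \<alpha> = S (l - i) (dual ks') \<alpha>"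
  shows "S l ks \<alpha> = S l (dual ks) \<alpha>"
proof -
  define X where "X i = (\<Sum>is\<in>{is. length is = length ks - 1 \<and> sum_list is = i}.
                            S (l - i) (insert_ones ks is) \<alpha>)" for i
  define Y where "Y i = (\<Sum>iss\<in>{iss. length iss = length (dual ks)
                              \<and> (\<forall>m<length (dual ks). length (iss ! m) = blocks_len (dual ks) m)
                              \<and> sum_list (map sum_list iss) = i}.
                            S (l - i) (map (\<lambda>m. dual ks ! m + sum_list (iss ! m)) [0..<length (dual ks)]) \<alpha>)" for i
  have "X 0 + (\<Sum>i=Suc 0..l. X i) = Y 0 + (\<Sum>i=Suc 0..l. Y i)"
    using P by (simp add: P_lhs_def P_rhs_def X_def Y_def sum.atLeast_Suc_atMost)
  moreover have "(\<Sum>i=Suc 0..l. X i) = (\<Sum>i=Suc 0..l. Y i)"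
    unfolding X_def Y_def using adm lower by (intro sum.cong refl sum_insert_ones_eq_sum_dual) auto
  moreover have "X 0 = S l ks \<alpha>"
    using adm sum_insert_ones_zero[where ks = ks] by (simp add: X_def admissible_def)
  moreover have "Y 0 = S l (dual ks) \<alpha>"
    using sum_dual_shape_zero[where kd = "dual ks"] by (simp add: Y_def)
  ultimately show ?thesis
    by simp
qed

theorem proposition2p9:
  shows "(\<forall>ks l (\<alpha>::complex). admissible ks \<and> Re \<alpha> > 0 \<longrightarrow> S l ks \<alpha> = S l (dual ks) \<alpha>)
     \<longleftrightarrow> (\<forall>ks l (\<alpha>::complex). admissible ks \<and> Re \<alpha> > 0 \<longrightarrow> P_lhs l ks \<alpha> = P_rhs l (dual ks) \<alpha>)"
proof
  assume T: "\<forall>ks l (\<alpha>::complex). admissible ks \<and> Re \<alpha> > 0 \<longrightarrow> S l ks \<alpha> = S l (dual ks) \<alpha>"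
  show "\<forall>ks l (\<alpha>::complex). admissible ks \<and> Re \<alpha> > 0 \<longrightarrow> P_lhs l ks \<alpha> = P_rhs l (dual ks) \<alpha>"
  proof (intro allI impI)
    fix ks l and \<alpha> :: complex
    assume "admissible ks \<and> Re \<alpha> > 0"
    with T show "P_lhs l ks \<alpha> = P_rhs l (dual ks) \<alpha>"
      by (intro P_lhs_eq_P_rhs_if_S_dual) simp_all
  qed
next
  assume P: "\<forall>ks l (\<alpha>::complex). admissible ks \<and> Re \<alpha> > 0 \<longrightarrow> P_lhs l ks \<alpha> = P_rhs l (dual ks) \<alpha>"
  have "S l ks \<alpha> = S l (dual ks) \<alpha>" if "admissible ks" "Re \<alpha> > 0" for l ks and \<alpha> :: complex
    using that
  proof (induction l arbitrary: ks rule: less_induct)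
    case (less l)
    show ?case
    proof (rule S_dual_if_P_lhs_eq_P_rhs)
      show "admissible ks" "P_lhs l ks \<alpha> = P_rhs l (dual ks) \<alpha>"
        using P less.prems by simp_all
      show "S (l - i) ks' \<alpha> = S (l - i) (dual ks') \<alpha>" if "0 < i" "i \<le> l" "admissible ks'" for i ks'
        using less.IH[of "l - i" ks'] less.prems(2) that by simp
    qed
  qed
  then show "\<forall>ks l (\<alpha>::complex). admissible ks \<and> Re \<alpha> > 0 \<longrightarrow> S l ks \<alpha> = S l (dual ks) \<alpha>"
    by blast
qed

end
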